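(* Let $1\le k\le m$, let $\phi_{m,k}$ be the automorphism of the free group $F(A_1,\dots,A_m,B_1,\dots,B_k)$ described below, and let $\bar B_k$ be the image of $B_k$ in the abelianization $\mathbb Z^{m+k}$. Then $\|\phi_{m,k}^n(B_k)\|\sim|(\phi_{m,k}^{ab})^n(\bar B_k)|_1\sim|(\phi_{m,k}^{ab})^n(\bar B_k)|_\infty\sim n^k$.
   Context: $\phi_{m,k}(A_i)=A_1\cdots A_{i-1}A_iA_{i-1}^{-1}\cdots A_1^{-1}$ for $1\le i\le m$, and $\phi_{m,k}(B_j)=A_1\cdots A_m(B_1\cdots B_j)A_{j-1}^{-1}\cdots A_1^{-1}$ for $1\le j\le k$. $\|\cdot\|$ is word length with respect to the free basis; $|\cdot|_1$ and $|\cdot|_\infty$ are the $\ell_1$ and $\ell_\infty$ norms of integer vectors with respect to the basis of images of $A_i,B_j$; $\phi^{ab}$ is the induced automorphism of the abelianization. $f\sim g$ means $f\le Ag+B$ and $g\le A'f+B'$ for some constants $A,A'>0$, $B,B'\ge0$. *)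

theory Defs
  imports Complex_Main
begin

datatype gen = GA nat | GB nat

text \<open>A letter is a generator with an exponent flag: False = g, True = g^{-1}.
  Words are lists of letters; group elements are represented by freely reduced words.\<close>
type_synonym letter = "gen \<times> bool"
type_synonym word = "letter list"

definition inv_letter :: "letter \<Rightarrow> letter" where
  "inv_letter x = (fst x, \<not> snd x)"

definition inv_word :: "word \<Rightarrow> word" where
  "inv_word w = rev (map inv_letter w)"

fun reduce :: "word \<Rightarrow> word" where
  "reduce [] = []"
| "reduce (x # xs) = (case reduce xs of
      [] \<Rightarrow> [x]
    | y # ys \<Rightarrow> (if y = inv_letter x then ys else x # y # ys))"

definition word_norm :: "word \<Rightarrow> nat" where
  "word_norm w = length (reduce w)"

definition gens :: "nat \<Rightarrow> nat \<Rightarrow> gen set" where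
  "gens m k = GA ` {1..m} \<union> GB ` {1..k}"

text \<open>Images of the generators:
  phi(A_i) = A_1 ... A_{i-1} A_i A_{i-1}^{-1} ... A_1^{-1},
  phi(B_j) = A_1 ... A_m (B_1 ... B_j) A_{j-1}^{-1} ... A_1^{-1}.\<close>
definition phi_gen :: "nat \<Rightarrow> gen \<Rightarrow> word" where
  "phi_gen m g = (case g of
      GA i \<Rightarrow> map (\<lambda>l. (GA l, False)) [1..<i] @ [(GA i, False)]
              @ inv_word (map (\<lambda>l. (GA l, False)) [1..<i])
    | GB j \<Rightarrow> map (\<lambda>l. (GA l, False)) [1..<m+1] @ map (\<lambda>l. (GB l, False)) [1..<j+1]
              @ inv_word (map (\<lambda>l. (GA l, False)) [1..<j]))"

definition phi_letter :: "nat \<Rightarrow> letter \<Rightarrow> word" where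
  "phi_letter m x = (if snd x then inv_word (phi_gen m (fst x)) else phi_gen m (fst x))"

definition phi :: "nat \<Rightarrow> word \<Rightarrow> word" where
  "phi m w = reduce (concat (map (phi_letter m) w))"

text \<open>Integer vectors in Z^{m+k} are functions gen => int (coordinates w.r.t. the
  images of A_i, B_j); only coordinates in gens m k matter.\<close>
definition ab_letter :: "letter \<Rightarrow> gen \<Rightarrow> int" where
  "ab_letter x = (\<lambda>g. if g = fst x then (if snd x then -1 else 1) else 0)"

definition ab :: "word \<Rightarrow> gen \<Rightarrow> int" where
  "ab w = (\<lambda>g. \<Sum>x\<leftarrow>w. ab_letter x g)"

definition phi_ab :: "nat \<Rightarrow> nat \<Rightarrow> (gen \<Rightarrow> int) \<Rightarrow> (gen \<Rightarrow> int)" where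
  "phi_ab m k v = (\<lambda>g. \<Sum>h\<in>gens m k. v h * ab (phi_gen m h) g)"

definition norm1 :: "nat \<Rightarrow> nat \<Rightarrow> (gen \<Rightarrow> int) \<Rightarrow> int" where
  "norm1 m k v = (\<Sum>g\<in>gens m k. \<bar>v g\<bar>)"

definition norminf :: "nat \<Rightarrow> nat \<Rightarrow> (gen \<Rightarrow> int) \<Rightarrow> int" where
  "norminf m k v = Max ((\<lambda>g. \<bar>v g\<bar>) ` gens m k)"

definition growth_equiv :: "(nat \<Rightarrow> real) \<Rightarrow> (nat \<Rightarrow> real) \<Rightarrow> bool" (infix "\<sim>\<^sub>g" 50) where
  "f \<sim>\<^sub>g g \<longleftrightarrow>
     (\<exists>A B. A > 0 \<and> B \<ge> 0 \<and> (\<forall>n. f n \<le> A * g n + B)) \<and>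
     (\<exists>A B. A > 0 \<and> B \<ge> 0 \<and> (\<forall>n. g n \<le> A * f n + B))"

end

theory Submission
  imports Defs
begin

text \<open>Put \<open>Q\<^sub>i(n) = A\<^sub>1\<^sup>n \<cdots> A\<^bsub>i-1\<^esub>\<^sup>n\<close>. By induction on \<open>n\<close>, \<open>\<phi>\<^sup>n(A\<^sub>i)\<close> is freely
  equal to \<open>Q\<^sub>i(n) A\<^sub>i Q\<^sub>i(n)\<^sup>-\<^sup>1\<close> and \<open>\<phi>\<^sup>n(B\<^sub>j)\<close> to \<open>Q\<^bsub>m+1\<^esub>(n) W Q\<^sub>j(n)\<^sup>-\<^sup>1\<close>
  for a positive word \<open>W\<close> of length at most \<open>((m+1)(n+1))\<^sup>j\<close>, so \<open>\<parallel>\<phi>\<^sup>n(B\<^sub>k)\<parallel> = O(n\<^sup>k)\<close>.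
  Abelianization does not increase length, hence
  \<open>|v\<^sub>n|\<^sub>\<infinity> \<le> |v\<^sub>n|\<^sub>1 \<le> \<parallel>\<phi>\<^sup>n(B\<^sub>k)\<parallel>\<close> for the abelianized image \<open>v\<^sub>n\<close> of \<open>\<phi>\<^sup>n(B\<^sub>k)\<close>.
  Conversely \<open>\<phi>\<^sup>a\<^sup>b\<close> has non-negative entries, \<open>B\<^sub>j\<close> contributing to \<open>B\<^sub>1, \<dots>, B\<^sub>j\<close>
  and \<open>B\<^sub>1\<close> to \<open>A\<^sub>m\<close>; so Pascal's rule bounds the \<open>A\<^sub>m\<close>-coordinate of \<open>v\<^sub>n\<close> from
  below by \<open>(n choose k) \<ge> (n/k)\<^sup>k\<close>. The four quantities thus bound each other cyclically.\<close>

section \<open>Free reduction\<close>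

fun reduced :: "word \<Rightarrow> bool" where
  "reduced [] = True"
| "reduced [x] = True"
| "reduced (x # y # ys) = (y \<noteq> inv_letter x \<and> reduced (y # ys))"

lemma inv_letter_inv_letter [simp]: "inv_letter (inv_letter x) = x"
  by (simp add: inv_letter_def)

lemma reduced_ConsD: "reduced (y # ys) \<Longrightarrow> reduced ys"
  by (cases ys) auto

lemma reduced_reduce: "reduced (reduce w)"
  by (induction w) (auto split: list.split dest: reduced_ConsD)

lemma reduce_reduced: "reduced w \<Longrightarrow> reduce w = w"
  by (induction w rule: reduced.induct) auto

lemma reduce_reduce [simp]: "reduce (reduce w) = reduce w"
  by (rule reduce_reduced[OF reduced_reduce])

lemma reduce_Cons_reduce: "reduce (x # reduce w) = reduce (x # w)"
  by (simp only: reduce.simps reduce_reduce)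

lemma reduce_Cons_reduced_cases:
  assumes "reduced r"
  obtains "reduce (x # r) = x # r"
  | r' where "r = inv_letter x # r'" and "reduce (x # r) = r'"
proof (cases r)
  case Nil
  then show ?thesis using that by simp
next
  case (Cons y r')
  have "reduced r'" and "reduce r = r"
    using assms Cons reduced_ConsD reduce_reduced by blast+
  then show ?thesis
    using that Cons by (cases "y = inv_letter x") (auto simp: reduce_reduced)
qed

lemma reduce_cancel: "reduce (x # inv_letter x # w) = reduce w"
proof (cases "reduce w")
  case Nil
  then show ?thesis by simp
next
  case (Cons y ys)
  show ?thesis
  proof (cases "y = x")
    case True
    then have "reduced (x # ys)" using Cons reduced_reduce[of w] by metis
    then show ?thesis using Cons True by (cases ys) auto
  qed (use Cons in simp)
qed

lemma reduce_inv_cancel: "reduce (inv_letter x # x # w) = reduce w"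
  using reduce_cancel[of "inv_letter x" w] by simp

lemma reduce_append_reduce_right: "reduce (u @ reduce v) = reduce (u @ v)"
  by (induction u) simp_all

lemma reduce_append_reduce_left: "reduce (reduce u @ v) = reduce (u @ v)"
proof (induction u arbitrary: v)
  case Nil
  then show ?case by simp
next
  case (Cons x u)
  have "reduce (reduce (x # reduce u) @ v) = reduce (x # reduce u @ v)"
    using reduced_reduce[of u]
  proof (cases rule: reduce_Cons_reduced_cases[where x = x])
    case (2 r')
    then show ?thesis using reduce_cancel[of x "r' @ v"] by simp
  qed simp
  also have "\<dots> = reduce (x # u @ v)"
    by (metis Cons.IH reduce_Cons_reduce)
  finally show ?case by (simp add: reduce_Cons_reduce)
qed

lemma reduce_append: "reduce (u @ v) = reduce (reduce u @ reduce v)"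
  by (simp add: reduce_append_reduce_left reduce_append_reduce_right)

lemma length_reduce: "length (reduce w) \<le> length w"
  by (induction w) (auto split: list.split)

lemma set_reduce: "set (reduce w) \<subseteq> set w"
  by (induction w) (auto split: list.split)

definition free_equiv :: "word \<Rightarrow> word \<Rightarrow> bool" (infix "=\<^sub>f" 50) where
  "u =\<^sub>f v \<longleftrightarrow> reduce u = reduce v"

lemma free_equiv_refl [simp]: "u =\<^sub>f u"
  by (simp add: free_equiv_def)

lemma free_equiv_sym: "u =\<^sub>f v \<Longrightarrow> v =\<^sub>f u"
  by (simp add: free_equiv_def)

lemma free_equiv_trans [trans]: "u =\<^sub>f v \<Longrightarrow> v =\<^sub>f w \<Longrightarrow> u =\<^sub>f w"
  by (simp add: free_equiv_def)

lemma reduce_free_equiv [simp]: "reduce u =\<^sub>f u"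
  by (simp add: free_equiv_def)

lemma free_equiv_append: "u =\<^sub>f v \<Longrightarrow> u' =\<^sub>f v' \<Longrightarrow> u @ u' =\<^sub>f v @ v'"
  unfolding free_equiv_def by (metis reduce_append)

lemma free_equiv_append_context: "u =\<^sub>f v \<Longrightarrow> a @ u @ b =\<^sub>f a @ v @ b"
  by (intro free_equiv_append free_equiv_refl)

lemma concat_free_equiv:
  "(\<And>x. x \<in> set xs \<Longrightarrow> f x =\<^sub>f g x) \<Longrightarrow> concat (map f xs) =\<^sub>f concat (map g xs)"
  by (induction xs) (auto intro: free_equiv_append)

lemma inv_word_Nil [simp]: "inv_word [] = []"
  by (simp add: inv_word_def)

lemma inv_word_Cons: "inv_word (x # u) = inv_word u @ [inv_letter x]"
  by (simp add: inv_word_def)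

lemma inv_word_append [simp]: "inv_word (u @ v) = inv_word v @ inv_word u"
  by (simp add: inv_word_def)

lemma inv_word_inv_word [simp]: "inv_word (inv_word u) = u"
  by (simp add: inv_word_def rev_map comp_def)

lemma length_inv_word [simp]: "length (inv_word u) = length u"
  by (simp add: inv_word_def)

lemma reduce_inv_word_append_cancel: "reduce (inv_word u @ u @ w) = reduce w"
proof (induction u arbitrary: w)
  case Nil
  then show ?case by simp
next
  case (Cons x u)
  have "reduce (inv_word (x # u) @ (x # u) @ w)
      = reduce (inv_word u @ reduce (inv_letter x # x # u @ w))"
    by (simp add: inv_word_Cons reduce_append_reduce_right del: reduce.simps)
  also have "\<dots> = reduce (inv_word u @ u @ w)"
    by (simp only: reduce_inv_cancel reduce_append_reduce_right)
  finally show ?case using Cons.IH by simp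
qed

lemma free_equiv_cancel_left: "a @ inv_word u @ u @ b =\<^sub>f a @ b"
  unfolding free_equiv_def
  by (metis reduce_inv_word_append_cancel reduce_append_reduce_right)

lemma free_equiv_cancel_right: "a @ u @ inv_word u @ b =\<^sub>f a @ b"
  using free_equiv_cancel_left[of a "inv_word u" b] by simp

lemma free_equiv_cancel_twice: "a @ inv_word u @ u @ b @ inv_word v @ v @ c =\<^sub>f a @ b @ c"
  using free_equiv_cancel_left[of a u "b @ inv_word v @ v @ c"]
    free_equiv_cancel_left[of "a @ b" v c]
  by (simp add: free_equiv_def)

lemma free_equiv_inv_word:
  assumes "u =\<^sub>f v"
  shows "inv_word u =\<^sub>f inv_word v"
proof -
  have "inv_word u =\<^sub>f inv_word u @ v @ inv_word v"
    using free_equiv_cancel_right[of "inv_word u" v "[]"] by (simp add: free_equiv_sym)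
  also have "\<dots> =\<^sub>f inv_word u @ u @ inv_word v"
    by (rule free_equiv_append_context[OF free_equiv_sym[OF assms]])
  also have "\<dots> =\<^sub>f inv_word v"
    using free_equiv_cancel_left[of "[]" u "inv_word v"] by simp
  finally show ?thesis .
qed

lemma free_equiv_conj:
  "u =\<^sub>f v \<Longrightarrow> u @ w @ inv_word u =\<^sub>f v @ w @ inv_word v"
  by (intro free_equiv_append free_equiv_refl free_equiv_inv_word)

section \<open>The endomorphism \<open>\<phi>\<close> and its iterates\<close>

definition phi_raw :: "nat \<Rightarrow> word \<Rightarrow> word" where
  "phi_raw m w = concat (map (phi_letter m) w)"

lemma phi_eq_reduce_phi_raw: "phi m w = reduce (phi_raw m w)"
  by (simp add: phi_def phi_raw_def)

lemma phi_raw_Nil [simp]: "phi_raw m [] = []"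
  by (simp add: phi_raw_def)

lemma phi_raw_Cons: "phi_raw m (x # w) = phi_letter m x @ phi_raw m w"
  by (simp add: phi_raw_def)

lemma phi_raw_append [simp]: "phi_raw m (u @ v) = phi_raw m u @ phi_raw m v"
  by (simp add: phi_raw_def)

lemma phi_letter_inv_letter: "phi_letter m (inv_letter x) = inv_word (phi_letter m x)"
  by (simp add: phi_letter_def inv_letter_def)

lemma phi_raw_inv_word: "phi_raw m (inv_word u) = inv_word (phi_raw m u)"
  by (induction u) (simp_all add: inv_word_Cons phi_raw_Cons phi_letter_inv_letter)

lemma phi_Nil [simp]: "phi m [] = []"
  by (simp add: phi_def)

lemma phi_Cons: "phi m (x # w) = reduce (phi_letter m x @ phi m w)"
  by (simp add: phi_eq_reduce_phi_raw phi_raw_Cons reduce_append_reduce_right)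

lemma phi_single: "phi m [(g, False)] = reduce (phi_gen m g)"
  by (simp add: phi_def phi_letter_def)

lemma phi_cancel: "phi m (x # inv_letter x # w) = phi m w"
  using free_equiv_cancel_right[of "[]" "phi_letter m x" "phi_raw m w"]
  by (simp add: phi_eq_reduce_phi_raw phi_raw_Cons phi_letter_inv_letter free_equiv_def)

lemma phi_reduce: "phi m (reduce w) = phi m w"
proof (induction w)
  case Nil
  then show ?case by simp
next
  case (Cons x xs)
  have "phi m (reduce (x # reduce xs)) = phi m (x # reduce xs)"
    using reduced_reduce[of xs]
  proof (cases rule: reduce_Cons_reduced_cases[where x = x])
    case (2 r')
    then show ?thesis by (simp add: phi_cancel)
  qed simp
  then show ?case
    by (simp add: phi_Cons Cons.IH reduce_Cons_reduce del: reduce.simps)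
qed

lemma phi_cong: "u =\<^sub>f v \<Longrightarrow> phi m u = phi m v"
  unfolding free_equiv_def by (metis phi_reduce)

lemma phi_append: "phi m (u @ v) =\<^sub>f phi m u @ phi m v"
  unfolding phi_eq_reduce_phi_raw free_equiv_def by (simp add: reduce_append[of "phi_raw m u"])

lemma phi_inv_word: "phi m (inv_word u) =\<^sub>f inv_word (phi m u)"
  unfolding phi_eq_reduce_phi_raw phi_raw_inv_word
  by (rule free_equiv_trans[OF reduce_free_equiv free_equiv_inv_word])
    (simp add: free_equiv_def)

abbreviation phi_pow :: "nat \<Rightarrow> nat \<Rightarrow> word \<Rightarrow> word" where
  "phi_pow m n \<equiv> phi m ^^ n"

lemma phi_pow_Suc: "phi_pow m (Suc n) w = phi_pow m n (phi m w)"
  by (simp only: funpow_Suc_right comp_apply)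

lemma phi_pow_Nil [simp]: "phi_pow m n [] = []"
  by (induction n) simp_all

lemma phi_pow_cong: "u =\<^sub>f v \<Longrightarrow> phi_pow m n u =\<^sub>f phi_pow m n v"
  by (induction n) (auto simp: phi_cong)

lemma phi_pow_append: "phi_pow m n (u @ v) =\<^sub>f phi_pow m n u @ phi_pow m n v"
proof (induction n)
  case (Suc n)
  then have "phi_pow m (Suc n) (u @ v) = phi m (phi_pow m n u @ phi_pow m n v)"
    by (simp add: phi_cong)
  also have "\<dots> =\<^sub>f phi_pow m (Suc n) u @ phi_pow m (Suc n) v"
    by (simp add: phi_append)
  finally show ?case .
qed simp

lemma phi_pow_append3:
  "phi_pow m n (u @ v @ w) =\<^sub>f phi_pow m n u @ phi_pow m n v @ phi_pow m n w"
  by (rule free_equiv_trans[OF phi_pow_append free_equiv_append_context[OF phi_pow_append,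
        where a = "phi_pow m n u" and b = "[]", simplified]])

lemma phi_pow_inv_word: "phi_pow m n (inv_word u) =\<^sub>f inv_word (phi_pow m n u)"
proof (induction n)
  case (Suc n)
  then have "phi_pow m (Suc n) (inv_word u) = phi m (inv_word (phi_pow m n u))"
    by (simp add: phi_cong)
  also have "\<dots> =\<^sub>f inv_word (phi_pow m (Suc n) u)"
    by (simp add: phi_inv_word)
  finally show ?case .
qed simp

lemma phi_pow_concat:
  "phi_pow m n (concat (map f xs)) =\<^sub>f concat (map (\<lambda>x. phi_pow m n (f x)) xs)"
proof (induction xs)
  case (Cons x xs)
  have "phi_pow m n (concat (map f (x # xs))) =\<^sub>f phi_pow m n (f x) @ phi_pow m n (concat (map f xs))"
    by (simp add: phi_pow_append)
  also have "\<dots> =\<^sub>f phi_pow m n (f x) @ concat (map (\<lambda>x. phi_pow m n (f x)) xs)"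
    using free_equiv_append_context[OF Cons.IH, of "phi_pow m n (f x)" "[]"] by simp
  finally show ?case by simp
qed simp

lemma phi_pow_Suc_single: "phi_pow m (Suc n) [(g, False)] =\<^sub>f phi_pow m n (phi_gen m g)"
  unfolding phi_pow_Suc phi_single by (rule phi_pow_cong[OF reduce_free_equiv])

section \<open>Explicit form of the iterates\<close>

definition A_prefix :: "nat \<Rightarrow> word" where
  "A_prefix i = map (\<lambda>l. (GA l, False)) [1..<i]"

definition A_prefix_pow :: "nat \<Rightarrow> nat \<Rightarrow> word" where
  "A_prefix_pow i n = concat (map (\<lambda>l. replicate n (GA l, False)) [1..<i])"

definition A_suffix_pow :: "nat \<Rightarrow> nat \<Rightarrow> nat \<Rightarrow> word" where
  "A_suffix_pow m j n = concat (map (\<lambda>l. replicate n (GA l, False)) [j..<m+1])"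

lemma A_prefix_Suc: "1 \<le> i \<Longrightarrow> A_prefix (Suc i) = A_prefix i @ [(GA i, False)]"
  by (simp add: A_prefix_def)

lemma A_prefix_pow_Suc:
  "1 \<le> i \<Longrightarrow> A_prefix_pow (Suc i) n = A_prefix_pow i n @ replicate n (GA i, False)"
  by (simp add: A_prefix_pow_def)

lemma A_prefix_pow_0 [simp]: "A_prefix_pow i 0 = []"
  by (simp add: A_prefix_pow_def)

lemma A_prefix_pow_split:
  assumes "1 \<le> j" "j \<le> m + 1"
  shows "A_prefix_pow (m + 1) n = A_prefix_pow j n @ A_suffix_pow m j n"
proof -
  have "[1..<m+1] = [1..<j] @ [j..<m+1]"
    using assms by (metis le_add_diff_inverse upt_add_eq_append)
  then show ?thesis by (simp add: A_prefix_pow_def A_suffix_pow_def)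
qed

lemma phi_gen_GA: "phi_gen m (GA i) = A_prefix i @ [(GA i, False)] @ inv_word (A_prefix i)"
  by (simp add: phi_gen_def A_prefix_def)

lemma phi_gen_GB:
  "phi_gen m (GB j) = A_prefix (m + 1) @ concat (map (\<lambda>l. [(GB l, False)]) [1..<j+1])
     @ inv_word (A_prefix j)"
  by (simp add: phi_gen_def A_prefix_def map_concat[symmetric])

lemma phi_pow_A_prefix_append_pow:
  assumes GA: "\<And>i. phi_pow m n [(GA i, False)]
                 =\<^sub>f A_prefix_pow i n @ [(GA i, False)] @ inv_word (A_prefix_pow i n)"
  shows "phi_pow m n (A_prefix i) @ A_prefix_pow i n =\<^sub>f A_prefix_pow i (Suc n)"
proof (induction i)
  case (Suc i)
  show ?case
  proof (cases "i = 0")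
    case False
    then have i: "1 \<le> i" by simp
    let ?A = "[(GA i, False)]" and ?P = "phi_pow m n (A_prefix i)" and ?Q = "A_prefix_pow i n"
    have "phi_pow m n (A_prefix (Suc i)) @ A_prefix_pow (Suc i) n
        = phi_pow m n (A_prefix i @ ?A) @ ?Q @ replicate n (GA i, False)"
      using i by (simp add: A_prefix_Suc A_prefix_pow_Suc)
    also have "\<dots> =\<^sub>f (?P @ phi_pow m n ?A) @ ?Q @ replicate n (GA i, False)"
      by (intro free_equiv_append phi_pow_append free_equiv_refl)
    also have "\<dots> =\<^sub>f ?P @ (?Q @ ?A @ inv_word ?Q) @ ?Q @ replicate n (GA i, False)"
      using free_equiv_append_context[OF GA[of i], of ?P "?Q @ replicate n (GA i, False)"] by simp
    also have "\<dots> =\<^sub>f (?P @ ?Q) @ ?A @ replicate n (GA i, False)"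
      using free_equiv_cancel_left[of "?P @ ?Q @ ?A" ?Q] by simp
    also have "\<dots> =\<^sub>f A_prefix_pow i (Suc n) @ ?A @ replicate n (GA i, False)"
      using Suc.IH by (rule free_equiv_append) simp
    also have "\<dots> = A_prefix_pow (Suc i) (Suc n)"
      using i by (simp add: A_prefix_pow_Suc replicate_append_same)
    finally show ?thesis .
  qed (simp add: A_prefix_def A_prefix_pow_def)
qed (simp add: A_prefix_def A_prefix_pow_def)

lemma phi_pow_GA:
  "phi_pow m n [(GA i, False)]
     =\<^sub>f A_prefix_pow i n @ [(GA i, False)] @ inv_word (A_prefix_pow i n)"
proof (induction n arbitrary: i)
  case (Suc n)
  let ?P = "phi_pow m n (A_prefix i)" and ?A = "[(GA i, False)]"
  have "phi_pow m (Suc n) ?A =\<^sub>f phi_pow m n (A_prefix i @ ?A @ inv_word (A_prefix i))"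
    using phi_pow_Suc_single[where g = "GA i"] by (simp only: phi_gen_GA)
  also have "\<dots> =\<^sub>f ?P @ phi_pow m n ?A @ phi_pow m n (inv_word (A_prefix i))"
    by (rule phi_pow_append3)
  also have "\<dots> =\<^sub>f ?P @ (A_prefix_pow i n @ ?A @ inv_word (A_prefix_pow i n)) @ inv_word ?P"
    by (intro free_equiv_append free_equiv_refl Suc.IH phi_pow_inv_word)
  also have "\<dots> = (?P @ A_prefix_pow i n) @ ?A @ inv_word (?P @ A_prefix_pow i n)"
    by simp
  also have "\<dots> =\<^sub>f A_prefix_pow i (Suc n) @ ?A @ inv_word (A_prefix_pow i (Suc n))"
    by (intro free_equiv_conj phi_pow_A_prefix_append_pow Suc.IH)
  finally show ?case .
qed simp

lemma phi_pow_A_prefix: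
  "phi_pow m n (A_prefix i) =\<^sub>f A_prefix_pow i (Suc n) @ inv_word (A_prefix_pow i n)"
proof -
  have "phi_pow m n (A_prefix i)
      =\<^sub>f phi_pow m n (A_prefix i) @ A_prefix_pow i n @ inv_word (A_prefix_pow i n)"
    using free_equiv_cancel_right[of "phi_pow m n (A_prefix i)" "A_prefix_pow i n" "[]"]
    by (simp add: free_equiv_sym)
  also have "\<dots> =\<^sub>f A_prefix_pow i (Suc n) @ inv_word (A_prefix_pow i n)"
    using free_equiv_append[OF phi_pow_A_prefix_append_pow[OF phi_pow_GA] free_equiv_refl] by simp
  finally show ?thesis .
qed

text \<open>The recursion comes from \<open>\<phi>(B\<^sub>j) = A\<^sub>1 \<cdots> A\<^sub>m B\<^sub>1 \<cdots> B\<^sub>j A\<^bsub>j-1\<^esub>\<^sup>-\<^sup>1 \<cdots> A\<^sub>1\<^sup>-\<^sup>1\<close>: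
  in \<open>\<phi>\<^sup>n\<close> of this word, consecutive factors \<open>\<phi>\<^sup>n(B\<^sub>l)\<close> and \<open>\<phi>\<^sup>n(B\<^bsub>l+1\<^esub>)\<close> meet in
  \<open>Q\<^sub>l(n)\<^sup>-\<^sup>1 Q\<^bsub>m+1\<^esub>(n) = A\<^sub>l\<^sup>n \<cdots> A\<^sub>m\<^sup>n\<close>.\<close>
primrec B_core :: "nat \<Rightarrow> nat \<Rightarrow> nat \<Rightarrow> word" where
  "B_core m 0 j = [(GB j, False)]"
| "B_core m (Suc n) j = concat (map (\<lambda>l. (if l = 1 then [] else A_suffix_pow m (l - 1) n)
      @ B_core m n l) [1..<Suc j])"

lemma concat_B_core_conj:
  assumes "1 \<le> j" "j \<le> m + 1"
  shows "concat (map (\<lambda>l. A_prefix_pow (m+1) n @ B_core m n l @ inv_word (A_prefix_pow l n)) [1..<Suc j])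
     =\<^sub>f A_prefix_pow (m+1) n @ B_core m (Suc n) j @ inv_word (A_prefix_pow j n)"
  using assms
proof (induction j)
  case (Suc j)
  let ?Q = "A_prefix_pow (m+1) n"
  show ?case
  proof (cases "j = 0")
    case True
    then show ?thesis by (simp add: A_prefix_pow_def)
  next
    case False
    then have j: "1 \<le> j" "j \<le> m + 1" using Suc.prems by auto
    have "concat (map (\<lambda>l. ?Q @ B_core m n l @ inv_word (A_prefix_pow l n)) [1..<Suc (Suc j)])
        =\<^sub>f (?Q @ B_core m (Suc n) j @ inv_word (A_prefix_pow j n))
          @ (?Q @ B_core m n (Suc j) @ inv_word (A_prefix_pow (Suc j) n))"
      using free_equiv_append[OF Suc.IH[OF j] free_equiv_refl] by simp
    also have "\<dots> = (?Q @ B_core m (Suc n) j) @ inv_word (A_prefix_pow j n) @ A_prefix_pow j n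
        @ A_suffix_pow m j n @ B_core m n (Suc j) @ inv_word (A_prefix_pow (Suc j) n)"
      using A_prefix_pow_split[OF j, of n] by simp
    also have "\<dots> =\<^sub>f (?Q @ B_core m (Suc n) j)
        @ A_suffix_pow m j n @ B_core m n (Suc j) @ inv_word (A_prefix_pow (Suc j) n)"
      by (rule free_equiv_cancel_left)
    also have "\<dots> = ?Q @ B_core m (Suc n) (Suc j) @ inv_word (A_prefix_pow (Suc j) n)"
      using j by simp
    finally show ?thesis .
  qed
qed simp

lemma phi_pow_GB:
  assumes "1 \<le> j" "j \<le> m"
  shows "phi_pow m n [(GB j, False)]
     =\<^sub>f A_prefix_pow (m+1) n @ B_core m n j @ inv_word (A_prefix_pow j n)"
  using assms
proof (induction n arbitrary: j)
  case (Suc n)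
  let ?Bs = "concat (map (\<lambda>l. [(GB l, False)]) [1..<Suc j])"
  let ?Q = "A_prefix_pow (m+1) n" and ?Q' = "A_prefix_pow (m+1) (Suc n)"
  have "phi_pow m (Suc n) [(GB j, False)]
      =\<^sub>f phi_pow m n (A_prefix (m+1) @ ?Bs @ inv_word (A_prefix j))"
    using phi_pow_Suc_single[where g = "GB j"] by (simp add: phi_gen_GB)
  also have "\<dots> =\<^sub>f phi_pow m n (A_prefix (m+1)) @ phi_pow m n ?Bs @ phi_pow m n (inv_word (A_prefix j))"
    by (rule phi_pow_append3)
  also have "\<dots> =\<^sub>f (?Q' @ inv_word ?Q)
      @ concat (map (\<lambda>l. ?Q @ B_core m n l @ inv_word (A_prefix_pow l n)) [1..<Suc j])
      @ (A_prefix_pow j n @ inv_word (A_prefix_pow j (Suc n)))"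
  proof (intro free_equiv_append)
    show "phi_pow m n (A_prefix (m+1)) =\<^sub>f ?Q' @ inv_word ?Q"
      by (rule phi_pow_A_prefix)
    have "phi_pow m n ?Bs =\<^sub>f concat (map (\<lambda>l. phi_pow m n [(GB l, False)]) [1..<Suc j])"
      by (rule phi_pow_concat)
    also have "\<dots> =\<^sub>f concat (map (\<lambda>l. ?Q @ B_core m n l @ inv_word (A_prefix_pow l n)) [1..<Suc j])"
      using Suc by (intro concat_free_equiv) auto
    finally show "phi_pow m n ?Bs =\<^sub>f \<dots>" .
    have "phi_pow m n (inv_word (A_prefix j)) =\<^sub>f inv_word (phi_pow m n (A_prefix j))"
      by (rule phi_pow_inv_word)
    also have "\<dots> =\<^sub>f inv_word (A_prefix_pow j (Suc n) @ inv_word (A_prefix_pow j n))"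
      by (rule free_equiv_inv_word[OF phi_pow_A_prefix])
    finally show "phi_pow m n (inv_word (A_prefix j)) =\<^sub>f A_prefix_pow j n @ inv_word (A_prefix_pow j (Suc n))"
      by simp
  qed
  also have "\<dots> =\<^sub>f (?Q' @ inv_word ?Q) @ (?Q @ B_core m (Suc n) j @ inv_word (A_prefix_pow j n))
      @ (A_prefix_pow j n @ inv_word (A_prefix_pow j (Suc n)))"
    using Suc.prems by (intro free_equiv_append_context concat_B_core_conj) auto
  also have "\<dots> =\<^sub>f ?Q' @ B_core m (Suc n) j @ inv_word (A_prefix_pow j (Suc n))"
    using free_equiv_cancel_twice[of ?Q' ?Q "B_core m (Suc n) j" "A_prefix_pow j n"] by simp
  finally show ?case .
qed simp

lemma length_A_prefix_pow: "length (A_prefix_pow i n) = (i - 1) * n"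
  by (simp add: A_prefix_pow_def length_concat comp_def sum_list_triv)

lemma length_A_suffix_pow: "length (A_suffix_pow m j n) = (m + 1 - j) * n"
  by (simp add: A_suffix_pow_def length_concat comp_def sum_list_triv Suc_diff_le)

lemma length_B_core: "length (B_core m n j) \<le> ((m + 1) * (n + 1)) ^ j"
proof (induction n arbitrary: j)
  case 0
  then show ?case by simp
next
  case (Suc n)
  note outer_IH = Suc.IH
  define X where "X = (m + 1) * (n + 1)"
  define Y where "Y = (m + 1) * (Suc n + 1)"
  have XY: "Y = X + (m + 1)" by (simp add: X_def Y_def)
  \<comment> \<open>\<open>Y\<^bsup>j+1\<^esup> \<ge> X\<^bsup>j+1\<^esup> + (m + 1) Y\<^sup>j\<close>, while the three pieces of \<open>B_core m (n+1) (j+1)\<close>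
    have lengths at most \<open>Y\<^sup>j\<close>, \<open>m Y\<^sup>j\<close> and \<open>X\<^bsup>j+1\<^esup>\<close>.\<close>
  have "length (B_core m (Suc n) j) \<le> Y ^ j" for j
  proof (induction j)
    case (Suc j)
    show ?case
    proof (cases "j = 0")
      case True
      then show ?thesis using outer_IH[of 1] by (simp add: X_def Y_def)
    next
      case False
      have "n \<le> Y ^ j"
        using False XY order.trans[OF _ self_le_power[of Y j]] by (simp add: X_def)
      then have suffix: "length (A_suffix_pow m j n) \<le> m * Y ^ j"
        unfolding length_A_suffix_pow using False by (intro mult_le_mono) auto
      have "X ^ Suc j \<le> X * Y ^ j"
        using XY by (simp add: power_mono)
      then have "length (B_core m (Suc n) (Suc j)) \<le> Y ^ j + m * Y ^ j + X * Y ^ j"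
        using False Suc.IH suffix outer_IH[of "Suc j"] by (simp add: X_def)
      also have "\<dots> = Y ^ Suc j"
        by (simp add: XY algebra_simps)
      finally show ?thesis .
    qed
  qed simp
  then show ?case by (simp add: Y_def)
qed

lemma word_norm_phi_pow_GB:
  assumes "1 \<le> k" "k \<le> m"
  shows "word_norm (phi_pow m n [(GB k, False)]) \<le> (2 * m + (m + 1) ^ k) * (n + 1) ^ k"
proof -
  let ?w = "A_prefix_pow (m+1) n @ B_core m n k @ inv_word (A_prefix_pow k n)"
  have "word_norm (phi_pow m n [(GB k, False)]) = length (reduce ?w)"
    using phi_pow_GB[OF assms] by (simp add: free_equiv_def word_norm_def)
  also have "\<dots> \<le> m * n + length (B_core m n k) + (k - 1) * n"
    using length_reduce[of ?w] by (simp add: length_A_prefix_pow)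
  also have "\<dots> \<le> m * (n + 1) ^ k + (m + 1) ^ k * (n + 1) ^ k + m * (n + 1) ^ k"
  proof -
    have "n \<le> (n + 1) ^ k"
      using assms(1) order.trans[OF _ self_le_power[of "n + 1" k]] by simp
    then show ?thesis
      using assms length_B_core[of m n k, unfolded power_mult_distrib]
      by (intro add_mono mult_le_mono) auto
  qed
  also have "\<dots> = (2 * m + (m + 1) ^ k) * (n + 1) ^ k"
    by (simp add: algebra_simps)
  finally show ?thesis .
qed

section \<open>Abelianization\<close>

lemma ab_Nil [simp]: "ab [] g = 0"
  by (simp add: ab_def)

lemma ab_Cons: "ab (x # w) g = ab_letter x g + ab w g"
  by (simp add: ab_def)

lemma ab_append: "ab (u @ v) g = ab u g + ab v g"
  by (simp add: ab_def)

lemma ab_letter_inv_letter: "ab_letter (inv_letter x) g = - ab_letter x g"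
  by (simp add: ab_letter_def inv_letter_def)

lemma ab_inv_word: "ab (inv_word u) g = - ab u g"
  by (induction u) (simp_all add: inv_word_Cons ab_append ab_Cons ab_letter_inv_letter)

lemma ab_reduce: "ab (reduce w) = ab w"
proof -
  have "ab (reduce w) g = ab w g" for g
  proof (induction w)
    case (Cons x xs)
    then show ?case
      by (cases "reduce xs") (auto simp: ab_Cons ab_letter_inv_letter)
  qed simp
  then show ?thesis by blast
qed

lemma finite_gens [simp]: "finite (gens m k)"
  by (simp add: gens_def)

lemma norm1_ab_le_length: "norm1 m k (ab w) \<le> int (length w)"
proof (induction w)
  case Nil
  then show ?case by (simp add: norm1_def)
next
  case (Cons x w)
  have "norm1 m k (ab (x # w)) \<le> (\<Sum>g\<in>gens m k. \<bar>ab_letter x g\<bar>) + norm1 m k (ab w)"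
    unfolding norm1_def ab_Cons sum.distrib[symmetric] by (intro sum_mono abs_triangle_ineq)
  also have "(\<Sum>g\<in>gens m k. \<bar>ab_letter x g\<bar>) = (\<Sum>g\<in>gens m k. if g = fst x then 1 else 0)"
    by (rule sum.cong) (auto simp: ab_letter_def)
  also have "\<dots> \<le> 1"
    by (simp add: sum.delta)
  finally show ?case using Cons by simp
qed

lemma norm1_ab_le_word_norm: "norm1 m k (ab w) \<le> int (word_norm w)"
  using norm1_ab_le_length[of m k "reduce w"] by (simp add: ab_reduce word_norm_def)

lemma letters_phi_gen:
  assumes "k \<le> m" "g \<in> gens m k"
  shows "fst ` set (phi_gen m g) \<subseteq> gens m k"
  using assms unfolding gens_def phi_gen_def inv_word_def inv_letter_def
  by (auto split: gen.splits)

lemma letters_phi_pow: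
  assumes "k \<le> m" "fst ` set w \<subseteq> gens m k"
  shows "fst ` set (phi_pow m n w) \<subseteq> gens m k"
proof (induction n)
  case (Suc n)
  have "fst ` set (phi_raw m (phi_pow m n w)) \<subseteq> gens m k"
    using Suc letters_phi_gen[OF assms(1)]
    by (fastforce simp: phi_raw_def phi_letter_def inv_word_def inv_letter_def)
  then show ?case
    using set_reduce by (fastforce simp: phi_eq_reduce_phi_raw)
qed (use assms in simp)

lemma ab_phi:
  assumes "fst ` set w \<subseteq> gens m k"
  shows "ab (phi m w) = phi_ab m k (ab w)"
proof -
  have "ab (phi_raw m w) g = phi_ab m k (ab w) g" for g
    using assms
  proof (induction w)
    case Nil
    then show ?case by (simp add: phi_ab_def)
  next
    case (Cons x w)
    have "(\<Sum>h\<in>gens m k. ab_letter x h * ab (phi_gen m h) g)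
        = (\<Sum>h\<in>gens m k. if h = fst x then (if snd x then -1 else 1) * ab (phi_gen m h) g else 0)"
      by (rule sum.cong) (auto simp: ab_letter_def)
    also have "\<dots> = (if snd x then -1 else 1) * ab (phi_gen m (fst x)) g"
      using Cons.prems by (simp add: sum.delta')
    finally show ?case
      using Cons
      by (simp add: phi_raw_Cons ab_append phi_letter_def ab_inv_word phi_ab_def ab_Cons
          algebra_simps sum.distrib)
  qed
  then show ?thesis
    by (simp add: phi_eq_reduce_phi_raw ab_reduce fun_eq_iff)
qed

lemma ab_phi_pow:
  assumes "k \<le> m" "fst ` set w \<subseteq> gens m k"
  shows "ab (phi_pow m n w) = (phi_ab m k ^^ n) (ab w)"
  by (induction n) (simp_all add: ab_phi[OF letters_phi_pow[OF assms]])

lemma ab_phi_gen_GA: "ab (phi_gen m (GA i)) g = (if g = GA i then 1 else 0)"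
  by (simp add: phi_gen_GA ab_append ab_inv_word ab_Cons ab_letter_def)

lemma ab_phi_gen_GB:
  assumes "1 \<le> j" "j \<le> m"
  shows "ab (phi_gen m (GB j)) g
     = ab (map (\<lambda>l. (GA l, False)) [j..<m+1] @ map (\<lambda>l. (GB l, False)) [1..<Suc j]) g"
proof -
  have "A_prefix (m + 1) = A_prefix j @ map (\<lambda>l. (GA l, False)) [j..<m+1]"
    using assms upt_add_eq_append[of 1 j "m + 1 - j"] by (simp add: A_prefix_def)
  then show ?thesis
    by (simp add: phi_gen_GB ab_append ab_inv_word concat_map_singleton)
qed

lemma ab_nonneg: "\<forall>x\<in>set w. \<not> snd x \<Longrightarrow> 0 \<le> ab w g"
  by (induction w) (auto simp: ab_Cons ab_letter_def)

lemma one_le_ab: "\<forall>x\<in>set w. \<not> snd x \<Longrightarrow> (g, False) \<in> set w \<Longrightarrow> 1 \<le> ab w g"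
proof (induction w)
  case (Cons x w)
  then have "0 \<le> ab w g" by (intro ab_nonneg) auto
  with Cons show ?case by (auto simp: ab_Cons ab_letter_def)
qed simp

lemma ab_phi_gen_nonneg:
  assumes "k \<le> m" "h \<in> gens m k"
  shows "0 \<le> ab (phi_gen m h) g"
proof (cases h)
  case (GB j)
  then have "1 \<le> j" "j \<le> m" using assms by (auto simp: gens_def)
  then show ?thesis using GB by (simp add: ab_phi_gen_GB) (rule ab_nonneg, auto)
qed (simp add: ab_phi_gen_GA)

lemma ab_phi_gen_GB_GB: "1 \<le> l \<Longrightarrow> l \<le> j \<Longrightarrow> j \<le> m \<Longrightarrow> 1 \<le> ab (phi_gen m (GB j)) (GB l)"
  by (simp add: ab_phi_gen_GB) (rule one_le_ab, auto)

lemma ab_phi_gen_GB_GA: "1 \<le> j \<Longrightarrow> j \<le> m \<Longrightarrow> 1 \<le> ab (phi_gen m (GB j)) (GA m)"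
  by (simp add: ab_phi_gen_GB) (rule one_le_ab, auto)

lemma phi_ab_nonneg:
  assumes "k \<le> m" "\<forall>h\<in>gens m k. 0 \<le> v h"
  shows "0 \<le> phi_ab m k v g"
  using assms unfolding phi_ab_def by (intro sum_nonneg mult_nonneg_nonneg ab_phi_gen_nonneg) auto

lemma sum_le_phi_ab:
  assumes "k \<le> m" "\<forall>h\<in>gens m k. 0 \<le> v h"
    and "H \<subseteq> gens m k" "\<forall>h\<in>H. 1 \<le> ab (phi_gen m h) g"
  shows "(\<Sum>h\<in>H. v h) \<le> phi_ab m k v g"
proof -
  have "(\<Sum>h\<in>H. v h) \<le> (\<Sum>h\<in>H. v h * ab (phi_gen m h) g)"
  proof (rule sum_mono)
    fix h assume "h \<in> H"
    then show "v h \<le> v h * ab (phi_gen m h) g"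
      using assms mult_left_mono[of 1 "ab (phi_gen m h) g" "v h"] by auto
  qed
  also have "\<dots> \<le> (\<Sum>h\<in>gens m k. v h * ab (phi_gen m h) g)"
    using assms by (intro sum_mono2 mult_nonneg_nonneg ab_phi_gen_nonneg) auto
  finally show ?thesis by (simp add: phi_ab_def)
qed

abbreviation ab_orbit :: "nat \<Rightarrow> nat \<Rightarrow> nat \<Rightarrow> gen \<Rightarrow> int" where
  "ab_orbit m k n \<equiv> (phi_ab m k ^^ n) (ab [(GB k, False)])"

lemma ab_orbit_eq_ab_phi_pow:
  "k \<le> m \<Longrightarrow> 1 \<le> k \<Longrightarrow> ab_orbit m k n = ab (phi_pow m n [(GB k, False)])"
  by (simp add: ab_phi_pow gens_def)

lemma ab_orbit_nonneg: "k \<le> m \<Longrightarrow> 0 \<le> ab_orbit m k n g"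
  by (induction n arbitrary: g) (simp_all add: ab_Cons ab_letter_def phi_ab_nonneg)

lemma ab_orbit_GB_ge:
  assumes "1 \<le> l" "l \<le> k" "k \<le> m"
  shows "int (n choose (k - l)) \<le> ab_orbit m k n (GB l)"
  using assms(1,2)
proof (induction n arbitrary: l)
  case 0
  then show ?case by (simp add: ab_Cons ab_letter_def)
next
  case (Suc n)
  let ?sum = "\<lambda>H. \<Sum>h\<in>H. ab_orbit m k n h"
  have le_Suc: "?sum H \<le> ab_orbit m k (Suc n) (GB l)"
    if "H \<subseteq> gens m k" "\<forall>h\<in>H. 1 \<le> ab (phi_gen m h) (GB l)" for H
    unfolding funpow.simps(2) comp_apply using assms(3) that
    by (intro sum_le_phi_ab) (auto intro: ab_orbit_nonneg)
  show ?case
  proof (cases "l = k")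
    case True
    have "?sum {GB k} \<le> ab_orbit m k (Suc n) (GB l)"
      using Suc.prems True assms(3) by (intro le_Suc) (auto simp: gens_def ab_phi_gen_GB_GB)
    then show ?thesis using Suc.IH[of k] Suc.prems True by simp
  next
    case False
    have "?sum {GB l, GB (Suc l)} \<le> ab_orbit m k (Suc n) (GB l)"
      using Suc.prems False assms(3) by (intro le_Suc) (auto simp: gens_def ab_phi_gen_GB_GB)
    moreover have "Suc n choose (k - l) = (n choose (k - Suc l)) + (n choose (k - l))"
      using Suc.prems False by (simp add: Suc_diff_Suc[symmetric])
    ultimately show ?thesis
      using Suc.IH[of l] Suc.IH[of "Suc l"] Suc.prems False by simp
  qed
qed

lemma ab_orbit_GA_ge:
  assumes "1 \<le> k" "k \<le> m"
  shows "int (n choose k) \<le> ab_orbit m k n (GA m)"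
proof (induction n)
  case 0
  then show ?case using assms by (simp add: ab_Cons ab_letter_def)
next
  case (Suc n)
  have "(\<Sum>h\<in>{GA m, GB 1}. ab_orbit m k n h) \<le> ab_orbit m k (Suc n) (GA m)"
    unfolding funpow.simps(2) comp_apply using assms
    by (intro sum_le_phi_ab) (auto simp: gens_def ab_phi_gen_GA ab_phi_gen_GB_GA intro: ab_orbit_nonneg)
  moreover have "Suc n choose k = (n choose (k - 1)) + (n choose k)"
    using assms by (cases k) simp_all
  ultimately show ?case
    using Suc.IH ab_orbit_GB_ge[of 1 k m n] assms by simp
qed

lemma norminf_le_norm1: "1 \<le> m \<Longrightarrow> norminf m k v \<le> norm1 m k v"
  unfolding norminf_def norm1_def
  by (subst Max_le_iff) (auto simp: gens_def intro!: member_le_sum)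

lemma abs_le_norminf: "g \<in> gens m k \<Longrightarrow> \<bar>v g\<bar> \<le> norminf m k v"
  unfolding norminf_def by (rule Max_ge) auto

section \<open>Growth\<close>

definition growth_le :: "(nat \<Rightarrow> real) \<Rightarrow> (nat \<Rightarrow> real) \<Rightarrow> bool" (infix "\<lesssim>\<^sub>g" 50) where
  "f \<lesssim>\<^sub>g g \<longleftrightarrow> (\<exists>A B. A > 0 \<and> B \<ge> 0 \<and> (\<forall>n. f n \<le> A * g n + B))"

lemma growth_equiv_iff: "f \<sim>\<^sub>g g \<longleftrightarrow> f \<lesssim>\<^sub>g g \<and> g \<lesssim>\<^sub>g f"
  by (simp add: growth_equiv_def growth_le_def)

lemma growth_leI: "(\<And>n. f n \<le> A * g n + B) \<Longrightarrow> 0 < A \<Longrightarrow> 0 \<le> B \<Longrightarrow> f \<lesssim>\<^sub>g g"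
  unfolding growth_le_def by blast

lemma growth_le_of_le: "(\<And>n. f n \<le> g n) \<Longrightarrow> f \<lesssim>\<^sub>g g"
  by (rule growth_leI[where A = 1 and B = 0]) simp_all

lemma growth_le_trans [trans]:
  assumes "f \<lesssim>\<^sub>g g" "g \<lesssim>\<^sub>g h"
  shows "f \<lesssim>\<^sub>g h"
proof -
  obtain A B where A: "A > 0" "B \<ge> 0" "\<And>n. f n \<le> A * g n + B"
    using assms(1) by (auto simp: growth_le_def)
  obtain A' B' where A': "A' > 0" "B' \<ge> 0" "\<And>n. g n \<le> A' * h n + B'"
    using assms(2) by (auto simp: growth_le_def)
  have "f n \<le> (A * A') * h n + (A * B' + B)" for n
  proof -
    have "f n \<le> A * (A' * h n + B') + B"
      using A(3)[of n] mult_left_mono[OF A'(3)[of n] less_imp_le[OF A(1)]] by linarith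
    then show ?thesis by (simp add: algebra_simps)
  qed
  then show ?thesis
    using A A' by (intro growth_leI[where A = "A * A'" and B = "A * B' + B"]) auto
qed

lemma growth_equiv_of_cycle:
  "a \<lesssim>\<^sub>g d \<Longrightarrow> d \<lesssim>\<^sub>g c \<Longrightarrow> c \<lesssim>\<^sub>g b \<Longrightarrow> b \<lesssim>\<^sub>g a
     \<Longrightarrow> a \<sim>\<^sub>g b \<and> b \<sim>\<^sub>g c \<and> c \<sim>\<^sub>g d"
  by (meson growth_equiv_iff growth_le_trans)

lemma growth_le_Suc_pow: "(\<lambda>n. real (n + 1) ^ k) \<lesssim>\<^sub>g (\<lambda>n. real n ^ k)"
proof (rule growth_leI)
  fix n
  show "real (n + 1) ^ k \<le> 2 ^ k * real n ^ k + 1"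
  proof (cases "n = 0")
    case False
    then have "real (n + 1) ^ k \<le> (2 * real n) ^ k"
      by (intro power_mono) auto
    then show ?thesis by (simp add: power_mult_distrib)
  qed simp
qed simp_all

lemma growth_le_pow_binomial: "(\<lambda>n. real n ^ k) \<lesssim>\<^sub>g (\<lambda>n. real (n choose k))"
proof (rule growth_leI)
  fix n
  show "real n ^ k \<le> real k ^ k * real (n choose k) + real k ^ k"
  proof (cases "k \<le> n")
    case True
    have "real n ^ k = real k ^ k * (real n / real k) ^ k"
      using True by (cases "k = 0") (simp_all add: power_divide)
    also have "\<dots> \<le> real k ^ k * real (n choose k)"
      using binomial_ge_n_over_k_pow_k[OF True] by (intro mult_left_mono) auto
    finally show ?thesis by (simp add: add_increasing2)
  next
    case False
    then have "real n ^ k \<le> real k ^ k" by (intro power_mono) auto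
    then show ?thesis by (simp add: add_increasing)
  qed
qed (use not_gr0 in auto)

lemma growth_le_word_norm_pow:
  assumes "1 \<le> k" "k \<le> m"
  shows "(\<lambda>n. real (word_norm (phi_pow m n [(GB k, False)]))) \<lesssim>\<^sub>g (\<lambda>n. real n ^ k)"
proof -
  have "real (word_norm (phi_pow m n [(GB k, False)]))
      \<le> real (2 * m + (m + 1) ^ k) * real (n + 1) ^ k + 0" for n
    using of_nat_mono[OF word_norm_phi_pow_GB[OF assms, of n]] by simp
  then have "(\<lambda>n. real (word_norm (phi_pow m n [(GB k, False)]))) \<lesssim>\<^sub>g (\<lambda>n. real (n + 1) ^ k)"
    by (rule growth_leI) (simp_all add: add_nonneg_pos)
  also note growth_le_Suc_pow
  finally show ?thesis .
qed

lemma growth_le_pow_norminf: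
  assumes "1 \<le> k" "k \<le> m"
  shows "(\<lambda>n. real n ^ k) \<lesssim>\<^sub>g (\<lambda>n. real_of_int (norminf m k (ab_orbit m k n)))"
proof -
  have "GA m \<in> gens m k" using assms by (simp add: gens_def)
  then have "int (n choose k) \<le> norminf m k (ab_orbit m k n)" for n
    using ab_orbit_GA_ge[OF assms, of n] abs_le_norminf[of "GA m" m k "ab_orbit m k n"] by linarith
  then have "(\<lambda>n. real (n choose k)) \<lesssim>\<^sub>g (\<lambda>n. real_of_int (norminf m k (ab_orbit m k n)))"
    by (intro growth_le_of_le) (metis of_int_le_iff of_int_of_nat_eq)
  with growth_le_pow_binomial show ?thesis
    by (rule growth_le_trans)
qed

theorem corollary8p14:
  fixes m k :: nat
  assumes "1 \<le> k" and "k \<le> m"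
  shows "(\<lambda>n. real (word_norm ((phi m ^^ n) [(GB k, False)])))
           \<sim>\<^sub>g (\<lambda>n. real_of_int (norm1 m k ((phi_ab m k ^^ n) (ab [(GB k, False)]))))
       \<and> (\<lambda>n. real_of_int (norm1 m k ((phi_ab m k ^^ n) (ab [(GB k, False)]))))
           \<sim>\<^sub>g (\<lambda>n. real_of_int (norminf m k ((phi_ab m k ^^ n) (ab [(GB k, False)]))))
       \<and> (\<lambda>n. real_of_int (norminf m k ((phi_ab m k ^^ n) (ab [(GB k, False)]))))
           \<sim>\<^sub>g (\<lambda>n. real n ^ k)"
proof (rule growth_equiv_of_cycle)
  show "(\<lambda>n. real (word_norm (phi_pow m n [(GB k, False)]))) \<lesssim>\<^sub>g (\<lambda>n. real n ^ k)"
    using assms by (rule growth_le_word_norm_pow)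
  show "(\<lambda>n. real n ^ k) \<lesssim>\<^sub>g (\<lambda>n. real_of_int (norminf m k (ab_orbit m k n)))"
    using assms by (rule growth_le_pow_norminf)
  show "(\<lambda>n. real_of_int (norminf m k (ab_orbit m k n)))
      \<lesssim>\<^sub>g (\<lambda>n. real_of_int (norm1 m k (ab_orbit m k n)))"
    using assms by (intro growth_le_of_le) (simp add: norminf_le_norm1)
  show "(\<lambda>n. real_of_int (norm1 m k (ab_orbit m k n)))
      \<lesssim>\<^sub>g (\<lambda>n. real (word_norm (phi_pow m n [(GB k, False)])))"
    using assms by (intro growth_le_of_le)
      (metis ab_orbit_eq_ab_phi_pow norm1_ab_le_word_norm of_int_le_iff of_int_of_nat_eq)
qed

end
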